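(* Let $F$ be a field of characteristic two and let $(A,\sigma)$ be a central simple $F$-algebra with orthogonal involution. If $(A,\sigma)\otimes(M_2(F),\tau)\simeq(M_{2^n}(F),t)$ for some orthogonal involution $\tau$ on $M_2(F)$, then $(A,\sigma)\simeq(M_{2^{n-1}}(F),t)$.
   Context: Involutions are of the first kind; $t$ denotes the transpose involution; $\simeq$ is isomorphism of algebras with involution. *)

theory Defs
  imports Main "Jordan_Normal_Form.Matrix"
begin

definition F_algebra :: "('f::field \<Rightarrow> 'a::ring_1 \<Rightarrow> 'a) \<Rightarrow> bool" where
  "F_algebra sm \<longleftrightarrow>
     (\<forall>c x y. sm c (x + y) = sm c x + sm c y) \<and>
     (\<forall>c d x. sm (c + d) x = sm c x + sm d x) \<and>
     (\<forall>c d x. sm (c * d) x = sm c (sm d x)) \<and>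
     (\<forall>x. sm 1 x = x) \<and>
     (\<forall>c x y. sm c (x * y) = sm c x * y \<and> sm c (x * y) = x * sm c y)"

definition finite_dimensional_alg :: "('f::field \<Rightarrow> 'a::ring_1 \<Rightarrow> 'a) \<Rightarrow> bool" where
  "finite_dimensional_alg sm \<longleftrightarrow>
     (\<exists>B. finite B \<and> (\<forall>x. \<exists>f. x = (\<Sum>b\<in>B. sm (f b) b)))"

definition central_alg :: "('f::field \<Rightarrow> 'a::ring_1 \<Rightarrow> 'a) \<Rightarrow> bool" where
  "central_alg sm \<longleftrightarrow> (\<forall>z. (\<forall>x. z * x = x * z) \<longrightarrow> (\<exists>c. z = sm c 1))"

definition two_sided_ideal :: "'a::ring_1 set \<Rightarrow> bool" where
  "two_sided_ideal I \<longleftrightarrow> 0 \<in> I \<and> (\<forall>x\<in>I. \<forall>y\<in>I. x + y \<in> I) \<and>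
     (\<forall>x\<in>I. \<forall>a. a * x \<in> I \<and> x * a \<in> I)"

definition simple_ring :: "'a::ring_1 itself \<Rightarrow> bool" where
  "simple_ring _ \<longleftrightarrow> (0::'a) \<noteq> 1 \<and>
     (\<forall>I::'a set. two_sided_ideal I \<longrightarrow> I = {0} \<or> I = UNIV)"

definition central_simple_algebra :: "('f::field \<Rightarrow> 'a::ring_1 \<Rightarrow> 'a) \<Rightarrow> bool" where
  "central_simple_algebra sm \<longleftrightarrow> F_algebra sm \<and> finite_dimensional_alg sm \<and>
     central_alg sm \<and> simple_ring TYPE('a)"

definition involution_first_kind :: "('f::field \<Rightarrow> 'a::ring_1 \<Rightarrow> 'a) \<Rightarrow> ('a \<Rightarrow> 'a) \<Rightarrow> bool" where
  "involution_first_kind sm \<sigma> \<longleftrightarrow>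
     (\<forall>x y. \<sigma> (x + y) = \<sigma> x + \<sigma> y) \<and>
     (\<forall>x y. \<sigma> (x * y) = \<sigma> y * \<sigma> x) \<and>
     (\<forall>x. \<sigma> (\<sigma> x) = x) \<and>
     (\<forall>c x. \<sigma> (sm c x) = sm c (\<sigma> x))"

text \<open>Characteristic two: orthogonal iff 1 is not in Symd = {x + sigma x} (KMRT 2.6).\<close>
definition orthogonal_involution :: "('f::field \<Rightarrow> 'a::ring_1 \<Rightarrow> 'a) \<Rightarrow> ('a \<Rightarrow> 'a) \<Rightarrow> bool" where
  "orthogonal_involution sm \<sigma> \<longleftrightarrow> involution_first_kind sm \<sigma> \<and> (\<forall>x. x + \<sigma> x \<noteq> 1)"

definition mat_orthogonal_involution :: "nat \<Rightarrow> ('f::field mat \<Rightarrow> 'f mat) \<Rightarrow> bool" where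
  "mat_orthogonal_involution m \<tau> \<longleftrightarrow>
     (\<forall>x\<in>carrier_mat m m. \<tau> x \<in> carrier_mat m m) \<and>
     (\<forall>x\<in>carrier_mat m m. \<forall>y\<in>carrier_mat m m. \<tau> (x + y) = \<tau> x + \<tau> y) \<and>
     (\<forall>x\<in>carrier_mat m m. \<forall>y\<in>carrier_mat m m. \<tau> (x * y) = \<tau> y * \<tau> x) \<and>
     (\<forall>x\<in>carrier_mat m m. \<tau> (\<tau> x) = x) \<and>
     (\<forall>c. \<forall>x\<in>carrier_mat m m. \<tau> (c \<cdot>\<^sub>m x) = c \<cdot>\<^sub>m \<tau> x) \<and>
     (\<forall>x\<in>carrier_mat m m. x + \<tau> x \<noteq> 1\<^sub>m m)"

definition unit2 :: "nat \<Rightarrow> nat \<Rightarrow> 'f::field mat" where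
  "unit2 i j = mat 2 2 (\<lambda>(k, l). if k = i \<and> l = j then 1 else 0)"

text \<open>A \<otimes>_F M_2(F) is identified with M_2(A) via a \<otimes> m \<mapsto> (m_kl a)_kl;
  the involution sigma \<otimes> tau then sends X = sum X_ij \<otimes> e_ij to
  sum sigma(X_ij) \<otimes> tau(e_ij).\<close>
definition tensor_M2_inv ::
  "('f::field \<Rightarrow> 'a::ring_1 \<Rightarrow> 'a) \<Rightarrow> ('a \<Rightarrow> 'a) \<Rightarrow> ('f mat \<Rightarrow> 'f mat) \<Rightarrow> 'a mat \<Rightarrow> 'a mat" where
  "tensor_M2_inv sm \<sigma> \<tau> X =
     mat 2 2 (\<lambda>(k, l). \<Sum>i<2. \<Sum>j<2. sm ((\<tau> (unit2 i j)) $$ (k, l)) (\<sigma> (X $$ (i, j))))"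

definition alg_inv_iso ::
  "'a set \<Rightarrow> ('a \<Rightarrow> 'a \<Rightarrow> 'a) \<Rightarrow> ('a \<Rightarrow> 'a \<Rightarrow> 'a) \<Rightarrow> ('f \<Rightarrow> 'a \<Rightarrow> 'a) \<Rightarrow> ('a \<Rightarrow> 'a) \<Rightarrow>
   'b set \<Rightarrow> ('b \<Rightarrow> 'b \<Rightarrow> 'b) \<Rightarrow> ('b \<Rightarrow> 'b \<Rightarrow> 'b) \<Rightarrow> ('f \<Rightarrow> 'b \<Rightarrow> 'b) \<Rightarrow> ('b \<Rightarrow> 'b) \<Rightarrow> bool" where
  "alg_inv_iso S1 p1 t1 s1 i1 S2 p2 t2 s2 i2 \<longleftrightarrow>
     (\<exists>\<phi>. bij_betw \<phi> S1 S2 \<and>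
        (\<forall>x\<in>S1. \<forall>y\<in>S1. \<phi> (p1 x y) = p2 (\<phi> x) (\<phi> y) \<and> \<phi> (t1 x y) = t2 (\<phi> x) (\<phi> y)) \<and>
        (\<forall>c. \<forall>x\<in>S1. \<phi> (s1 c x) = s2 c (\<phi> x)) \<and>
        (\<forall>x\<in>S1. \<phi> (i1 x) = i2 (\<phi> x)))"

end

theory Submission
  imports Defs "Jordan_Normal_Form.Determinant"
begin

text \<open>
  The orthogonal involution \<open>\<tau>\<close> fixes a rank-one idempotent \<open>f\<close> of \<open>M\<^sub>2(F)\<close>. Then
  \<open>a \<mapsto> \<phi>(a \<otimes> f)\<close> identifies \<open>(A, \<sigma>)\<close> with the corner \<open>P M\<^sub>N(F) P\<close>, \<open>N = 2\<^sup>n\<close>, with the transpose.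
  Here \<open>P = \<phi>(1 \<otimes> f)\<close> is a symmetric idempotent.
  In characteristic two \<open>x\<^sup>T x = (\<Sum>i. x\<^sub>i)\<^sup>2\<close>. If all row sums of \<open>P\<close> vanished, the corner would
  contain an alternating \<open>Y\<close> with \<open>Y + Y\<^sup>T = P\<close>. That is an \<open>a\<close> with \<open>a + \<sigma> a = 1\<close>, which is
  excluded because \<open>\<sigma>\<close> is orthogonal. Otherwise a Gram-Schmidt process finds \<open>Q\<close> with \<open>Q\<^sup>T Q = 1\<^sub>r\<close>
  and \<open>Q Q\<^sup>T = P\<close>, and \<open>Y \<mapsto> Q\<^sup>T Y Q\<close> maps the corner onto \<open>(M\<^sub>r(F), t)\<close>. Finally \<open>f\<close> and \<open>1 - f\<close> are
  equivalent idempotents, hence so are \<open>P\<close> and \<open>1 - P\<close>, which gives \<open>N = 2r\<close>.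
\<close>

lemma index_mult_mat_sum:
  assumes "A \<in> carrier_mat nr n" "B \<in> carrier_mat n nc" "i < nr" "j < nc"
  shows "(A * B) $$ (i, j) = (\<Sum>k\<in>{0..<n}. A $$ (i, k) * B $$ (k, j))"
  using assms by (auto simp: scalar_prod_def intro!: sum.cong)

lemma sandwich_add_mat:
  assumes "A \<in> carrier_mat n n" "B \<in> carrier_mat n n" "P \<in> carrier_mat n n"
  shows "P * (A + B) * P = P * A * P + P * B * P"
  using assms by (simp add: mult_add_distrib_mat[of P n n] add_mult_distrib_mat[of _ n n])

lemma left_invertible_dim_le:
  fixes A B :: "'f::field mat"
  assumes A: "A \<in> carrier_mat m n" and B: "B \<in> carrier_mat n m" and BA: "B * A = 1\<^sub>m n"
  shows "n \<le> m"
proof (rule ccontr)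
  assume "\<not> n \<le> m"
  hence mn: "m < n" by simp
  define A' where "A' = mat n n (\<lambda>(i, j). if i < m then A $$ (i, j) else 0)"
  define B' where "B' = mat n n (\<lambda>(i, j). if j < m then B $$ (i, j) else 0)"
  have A': "A' \<in> carrier_mat n n" and B': "B' \<in> carrier_mat n n" unfolding A'_def B'_def by auto
  have "B' * A' = B * A"
  proof (rule eq_matI)
    fix i j assume i: "i < dim_row (B * A)" and j: "j < dim_col (B * A)"
    have "(B' * A') $$ (i, j) = (\<Sum>k\<in>{0..<n}. B' $$ (i, k) * A' $$ (k, j))"
      using A B i j by (intro index_mult_mat_sum[OF B' A']) auto
    also have "\<dots> = (\<Sum>k\<in>{0..<m}. B $$ (i, k) * A $$ (k, j))"
      using mn i j A B by (subst sum.mono_neutral_right[of "{0..<n}" "{0..<m}"])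
        (auto simp: A'_def B'_def intro!: sum.cong)
    also have "\<dots> = (B * A) $$ (i, j)"
      using A B i j by (intro index_mult_mat_sum[symmetric, OF B A]) auto
    finally show "(B' * A') $$ (i, j) = (B * A) $$ (i, j)" .
  qed (use A B A' B' in auto)
  hence "det B' * det A' = 1" using BA det_mult[OF B' A'] by simp
  moreover have "det A' = 0"
  proof -
    have "A' = mat\<^sub>r n n (\<lambda>i. if i = m then 0\<^sub>v n else row A' i)"
      using mn by (intro eq_matI) (auto simp: A'_def)
    also have "det \<dots> = 0" using mn A' by (intro det_row_0) auto
    finally show ?thesis .
  qed
  ultimately show False by simp
qed

lemma CHAR_2_two:
  assumes "CHAR('f::field) = 2"
  shows "(2::'f) = 0"
  using of_nat_CHAR[where 'a='f] assms by simp

lemma CHAR_2_add_self: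
  assumes "CHAR('f::field) = 2"
  shows "(x::'f) + x = 0"
  using CHAR_2_two[OF assms] by (metis mult_2 mult_zero_left)

lemma CHAR_2_uminus:
  assumes "CHAR('f::field) = 2"
  shows "- (x::'f) = x"
  using CHAR_2_add_self[OF assms, of x] by (simp add: add_eq_0_iff2)

lemma CHAR_2_sum_squares:
  assumes "CHAR('f::field) = 2"
  shows "(\<Sum>i\<in>S. (g i::'f) * g i) = (\<Sum>i\<in>S. g i) * (\<Sum>i\<in>S. g i)"
proof (induction S rule: infinite_finite_induct)
  case (insert a S)
  have "(g a + sum g S) * (g a + sum g S) = g a * g a + sum g S * sum g S + 2 * (g a * sum g S)"
    by (simp add: algebra_simps)
  with insert CHAR_2_two[OF assms] show ?case by simp
qed simp_all

section \<open>Symmetric idempotents in characteristic two\<close>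

definition symmetric_idempotent :: "nat \<Rightarrow> 'a::semiring_0 mat \<Rightarrow> bool" where
  "symmetric_idempotent N P \<longleftrightarrow> P \<in> carrier_mat N N \<and> transpose_mat P = P \<and> P * P = P"

lemma symmetric_idempotent_iff:
  "symmetric_idempotent N P \<longleftrightarrow> P \<in> carrier_mat N N \<and>
     (\<forall>i<N. \<forall>j<N. P $$ (j, i) = P $$ (i, j)) \<and>
     (\<forall>i<N. \<forall>j<N. (\<Sum>m\<in>{0..<N}. P $$ (i, m) * P $$ (m, j)) = P $$ (i, j))"
  by (auto simp: symmetric_idempotent_def mat_eq_iff index_mult_mat_sum simp del: index_mult_mat(1))

definition orthonormal_columns :: "nat \<Rightarrow> nat \<Rightarrow> 'a::semiring_1 mat \<Rightarrow> bool" where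
  "orthonormal_columns N k W \<longleftrightarrow> W \<in> carrier_mat N k \<and> transpose_mat W * W = 1\<^sub>m k"

lemma orthonormal_columns_iff:
  "orthonormal_columns N k W \<longleftrightarrow> W \<in> carrier_mat N k \<and>
     (\<forall>a<k. \<forall>b<k. (\<Sum>i\<in>{0..<N}. W $$ (i, a) * W $$ (i, b)) = (if a = b then 1 else 0))"
proof -
  have "transpose_mat W * W = 1\<^sub>m k \<longleftrightarrow>
      (\<forall>a<k. \<forall>b<k. (\<Sum>i\<in>{0..<N}. W $$ (i, a) * W $$ (i, b)) = (if a = b then 1 else 0))"
    if W: "W \<in> carrier_mat N k"
    using W by (auto simp: mat_eq_iff index_mult_mat_sum[of _ k N _ k] simp del: index_mult_mat(1)
        intro!: sum.cong)
  thus ?thesis unfolding orthonormal_columns_def by blast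
qed

definition row_sums_vanish :: "nat \<Rightarrow> 'a::comm_monoid_add mat \<Rightarrow> bool" where
  "row_sums_vanish N P \<longleftrightarrow> (\<forall>i<N. (\<Sum>j\<in>{0..<N}. P $$ (i, j)) = 0)"

lemma symmetric_idempotent_row_sums:
  fixes P :: "'f::field mat"
  assumes ch: "CHAR('f) = 2" and si: "symmetric_idempotent N P"
  defines "u i \<equiv> \<Sum>j\<in>{0..<N}. P $$ (i, j)"
  shows "\<And>i. i < N \<Longrightarrow> (\<Sum>m\<in>{0..<N}. P $$ (i, m) * u m) = u i"
    and "\<And>j. j < N \<Longrightarrow> (\<Sum>m\<in>{0..<N}. P $$ (m, j)) = u j"
    and "(\<Sum>i\<in>{0..<N}. u i) = 0 \<or> (\<Sum>i\<in>{0..<N}. u i) = 1"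
proof -
  have sym: "\<And>i j. i < N \<Longrightarrow> j < N \<Longrightarrow> P $$ (j, i) = P $$ (i, j)"
    and idem: "\<And>i j. i < N \<Longrightarrow> j < N \<Longrightarrow> (\<Sum>m\<in>{0..<N}. P $$ (i, m) * P $$ (m, j)) = P $$ (i, j)"
    using si by (auto simp: symmetric_idempotent_iff)
  show Pu: "(\<Sum>m\<in>{0..<N}. P $$ (i, m) * u m) = u i" if "i < N" for i
  proof -
    have "(\<Sum>m\<in>{0..<N}. P $$ (i, m) * u m) = (\<Sum>j\<in>{0..<N}. \<Sum>m\<in>{0..<N}. P $$ (i, m) * P $$ (m, j))"
      unfolding u_def by (simp add: sum_distrib_left) (rule sum.swap)
    also have "\<dots> = u i" unfolding u_def using that idem by (intro sum.cong) auto
    finally show ?thesis .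
  qed
  show colsum: "(\<Sum>m\<in>{0..<N}. P $$ (m, j)) = u j" if "j < N" for j
    unfolding u_def using sym that by (intro sum.cong) auto
  define L where "L = (\<Sum>i\<in>{0..<N}. u i)"
  have "L * L = (\<Sum>i\<in>{0..<N}. u i * u i)" unfolding L_def by (rule CHAR_2_sum_squares[OF ch, symmetric])
  also have "\<dots> = (\<Sum>i\<in>{0..<N}. \<Sum>m\<in>{0..<N}. P $$ (m, i) * u i)"
    using colsum by (intro sum.cong) (auto simp: sum_distrib_right[symmetric])
  also have "\<dots> = L" unfolding L_def using Pu by (subst sum.swap) (auto intro: sum.cong)
  finally show "L = 0 \<or> L = 1" by (metis mult_cancel_right2 mult_zero_left)
qed

text \<open>With \<open>u = P 1\<close> and \<open>L = 1\<^sup>T u\<close>: if \<open>L = 0\<close>, a scaled column of \<open>P\<close> serves as \<open>w\<close>; if \<open>L = 1\<close>,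
  \<open>u\<close> serves, corrected by a column of \<open>P - u u\<^sup>T\<close> when \<open>P \<noteq> u u\<^sup>T\<close>. The last disjunct keeps the
  row sums of \<open>P - w w\<^sup>T\<close> from vanishing.\<close>
lemma symmetric_idempotent_fixed_unit_vector:
  fixes P :: "'f::field mat"
  assumes ch: "CHAR('f) = 2" and si: "symmetric_idempotent N P" and nv: "\<not> row_sums_vanish N P"
  shows "\<exists>w. (\<forall>i<N. (\<Sum>m\<in>{0..<N}. P $$ (i, m) * w m) = w i) \<and> (\<Sum>m\<in>{0..<N}. w m) = 1 \<and>
     ((\<forall>i<N. \<forall>j<N. P $$ (i, j) = w i * w j) \<or> (\<exists>i<N. (\<Sum>j\<in>{0..<N}. P $$ (i, j)) \<noteq> w i))"
proof -
  have idem: "\<And>i j. i < N \<Longrightarrow> j < N \<Longrightarrow> (\<Sum>m\<in>{0..<N}. P $$ (i, m) * P $$ (m, j)) = P $$ (i, j)"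
    using si by (auto simp: symmetric_idempotent_iff)
  define u where "u i = (\<Sum>j\<in>{0..<N}. P $$ (i, j))" for i
  define L where "L = (\<Sum>i\<in>{0..<N}. u i)"
  note row_sums = symmetric_idempotent_row_sums[OF ch si, folded u_def]
  note Pu = row_sums(1) and colsum = row_sums(2)
  from row_sums(3) have "L = 0 \<or> L = 1" unfolding L_def .
  thus ?thesis
  proof
    assume L0: "L = 0"
    from nv obtain i where i: "i < N" and ui: "u i \<noteq> 0" unfolding row_sums_vanish_def u_def by auto
    define w where "w k = P $$ (k, i) / u i" for k
    have sw: "(\<Sum>m\<in>{0..<N}. w m) = 1"
      using colsum[OF i] ui unfolding w_def by (simp add: sum_divide_distrib[symmetric])
    moreover have "\<exists>k<N. u k \<noteq> w k"
    proof (rule ccontr)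
      assume "\<not> ?thesis"
      hence "L = (\<Sum>m\<in>{0..<N}. w m)" unfolding L_def by (auto intro: sum.cong)
      with sw L0 show False by simp
    qed
    moreover have "\<forall>k<N. (\<Sum>m\<in>{0..<N}. P $$ (k, m) * w m) = w k"
      using idem i unfolding w_def by (auto simp: sum_divide_distrib[symmetric])
    ultimately show ?thesis unfolding u_def by blast
  next
    assume L1: "L = 1"
    show ?thesis
    proof (cases "\<forall>i<N. \<forall>j<N. P $$ (i, j) = u i * u j")
      case True
      thus ?thesis using Pu L1 unfolding L_def by blast
    next
      case False
      then obtain k j where k: "k < N" and j: "j < N" and ne: "P $$ (k, j) \<noteq> u k * u j" by auto
      define w where "w i = u i + P $$ (i, j) - u i * u j" for i
      have "(\<Sum>m\<in>{0..<N}. P $$ (i, m) * w m) = w i" if i: "i < N" for i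
      proof -
        have "(\<Sum>m\<in>{0..<N}. P $$ (i, m) * w m) =
          (\<Sum>m\<in>{0..<N}. P $$ (i, m) * u m) + (\<Sum>m\<in>{0..<N}. P $$ (i, m) * P $$ (m, j))
           - (\<Sum>m\<in>{0..<N}. P $$ (i, m) * u m) * u j"
          unfolding w_def
          by (simp add: algebra_simps sum.distrib sum_subtractf sum_distrib_right sum_distrib_left)
        also have "\<dots> = w i" using Pu[OF i] idem[OF i j] unfolding w_def by simp
        finally show ?thesis .
      qed
      moreover have "(\<Sum>m\<in>{0..<N}. w m) = 1"
        using colsum[OF j] L1 unfolding w_def L_def
        by (simp add: sum.distrib sum_subtractf sum_distrib_right[symmetric])
      moreover have "(\<Sum>i\<in>{0..<N}. P $$ (k, i)) \<noteq> w k"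
        using ne unfolding w_def u_def by auto
      ultimately show ?thesis using k by blast
    qed
  qed
qed

lemma symmetric_idempotent_deflate:
  fixes P :: "'a::comm_ring_1 mat"
  assumes si: "symmetric_idempotent N P"
    and Pw: "\<And>i. i < N \<Longrightarrow> (\<Sum>m\<in>{0..<N}. P $$ (i, m) * w m) = w i"
    and ww: "(\<Sum>m\<in>{0..<N}. w m * w m) = 1"
  shows "symmetric_idempotent N (mat N N (\<lambda>(i, j). P $$ (i, j) - w i * w j))"
proof -
  have sym: "\<And>i j. i < N \<Longrightarrow> j < N \<Longrightarrow> P $$ (j, i) = P $$ (i, j)"
    and idem: "\<And>i j. i < N \<Longrightarrow> j < N \<Longrightarrow> (\<Sum>m\<in>{0..<N}. P $$ (i, m) * P $$ (m, j)) = P $$ (i, j)"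
    using si by (auto simp: symmetric_idempotent_iff)
  have wP: "(\<Sum>m\<in>{0..<N}. w m * P $$ (m, j)) = w j" if "j < N" for j
    using Pw[OF that] sym that by (auto simp: mult.commute intro!: sum.cong elim!: subst[rotated])
  have "(\<Sum>m\<in>{0..<N}. (P $$ (i, m) - w i * w m) * (P $$ (m, j) - w m * w j)) = P $$ (i, j) - w i * w j"
    if "i < N" "j < N" for i j
  proof -
    have "(\<Sum>m\<in>{0..<N}. (P $$ (i, m) - w i * w m) * (P $$ (m, j) - w m * w j)) =
      (\<Sum>m\<in>{0..<N}. P $$ (i, m) * P $$ (m, j)) - w i * (\<Sum>m\<in>{0..<N}. w m * P $$ (m, j))
        - (\<Sum>m\<in>{0..<N}. P $$ (i, m) * w m) * w j + w i * w j * (\<Sum>m\<in>{0..<N}. w m * w m)"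
      by (simp add: algebra_simps sum.distrib sum_subtractf sum_distrib_left sum_distrib_right)
    thus ?thesis using idem[OF that] wP[OF that(2)] Pw[OF that(1)] ww by simp
  qed
  thus ?thesis using sym by (auto simp: symmetric_idempotent_iff)
qed

lemma orthonormal_columns_append:
  fixes W :: "'a::comm_semiring_1 mat"
  assumes W: "orthonormal_columns N k W"
    and ww: "(\<Sum>i\<in>{0..<N}. w i * w i) = 1"
    and Ww: "\<And>a. a < k \<Longrightarrow> (\<Sum>i\<in>{0..<N}. W $$ (i, a) * w i) = 0"
  shows "orthonormal_columns N (Suc k) (mat N (Suc k) (\<lambda>(i, a). if a < k then W $$ (i, a) else w i))"
    (is "orthonormal_columns N (Suc k) ?W")
proof -
  define c where "c a i = (if a < k then W $$ (i, a) else w i)" for a i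
  have "(\<Sum>i\<in>{0..<N}. ?W $$ (i, a) * ?W $$ (i, b)) = (\<Sum>i\<in>{0..<N}. c a i * c b i)"
    if "a < Suc k" "b < Suc k" for a b
    using that by (intro sum.cong) (auto simp: c_def)
  moreover have wW: "(\<Sum>i\<in>{0..<N}. w i * W $$ (i, a)) = 0" if "a < k" for a
    using Ww[OF that] by (simp add: mult.commute)
  moreover have "(\<Sum>i\<in>{0..<N}. c a i * c b i) = (if a = b then 1 else 0)"
    if "a < Suc k" "b < Suc k" for a b
    using that W ww Ww[of a] wW[of b] by (auto simp: c_def orthonormal_columns_iff less_Suc_eq)
  ultimately show ?thesis by (simp add: orthonormal_columns_iff)
qed

lemma symmetric_fixed_orthogonal_kernel:
  fixes P :: "'a::comm_semiring_1 mat"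
  assumes sym: "\<And>i j. i < N \<Longrightarrow> j < N \<Longrightarrow> P $$ (j, i) = P $$ (i, j)"
    and Pw: "\<And>i. i < N \<Longrightarrow> (\<Sum>m\<in>{0..<N}. P $$ (i, m) * w m) = w i"
    and Px: "\<And>i. i < N \<Longrightarrow> (\<Sum>m\<in>{0..<N}. P $$ (i, m) * x m) = 0"
  shows "(\<Sum>i\<in>{0..<N}. x i * w i) = 0"
proof -
  have "(\<Sum>i\<in>{0..<N}. x i * w i) = (\<Sum>i\<in>{0..<N}. \<Sum>m\<in>{0..<N}. x i * (P $$ (m, i) * w m))"
    by (intro sum.cong) (auto simp: Pw sym sum_distrib_left[symmetric])
  also have "\<dots> = (\<Sum>m\<in>{0..<N}. \<Sum>i\<in>{0..<N}. x i * (P $$ (m, i) * w m))"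
    by (rule sum.swap)
  also have "\<dots> = (\<Sum>m\<in>{0..<N}. (\<Sum>i\<in>{0..<N}. P $$ (m, i) * x i) * w m)"
    by (simp add: sum_distrib_left sum_distrib_right ac_simps)
  also have "\<dots> = 0" using Px by simp
  finally show ?thesis .
qed

lemma deflate_kernel_append:
  fixes P :: "'a::comm_ring_1 mat"
  assumes Pw: "\<And>i. i < N \<Longrightarrow> (\<Sum>m\<in>{0..<N}. P $$ (i, m) * w m) = w i"
    and ww: "(\<Sum>m\<in>{0..<N}. w m * w m) = 1"
    and PW: "\<And>i a. i < N \<Longrightarrow> a < k \<Longrightarrow> (\<Sum>m\<in>{0..<N}. P $$ (i, m) * W $$ (m, a)) = 0"
    and Ww: "\<And>a. a < k \<Longrightarrow> (\<Sum>i\<in>{0..<N}. W $$ (i, a) * w i) = 0"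
    and i: "i < N" and a: "a < Suc k"
  shows "(\<Sum>m\<in>{0..<N}. mat N N (\<lambda>(i, j). P $$ (i, j) - w i * w j) $$ (i, m) *
    mat N (Suc k) (\<lambda>(i, a). if a < k then W $$ (i, a) else w i) $$ (m, a)) = 0"
    (is "(\<Sum>m\<in>{0..<N}. ?P' $$ (i, m) * ?W' $$ (m, a)) = 0")
proof -
  have "(\<Sum>m\<in>{0..<N}. ?P' $$ (i, m) * ?W' $$ (m, a)) =
    (\<Sum>m\<in>{0..<N}. P $$ (i, m) * ?W' $$ (m, a)) - w i * (\<Sum>m\<in>{0..<N}. w m * ?W' $$ (m, a))"
    using i by (simp add: algebra_simps sum_subtractf sum_distrib_left)
  also have "\<dots> = 0"
  proof (cases "a < k")
    case True
    thus ?thesis using Ww[OF True] PW[OF i True] by (simp add: mult.commute)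
  next
    case False
    hence "a = k" using a by simp
    thus ?thesis using ww Pw[OF i] by simp
  qed
  finally show ?thesis .
qed

lemma deflate_row_sums:
  fixes P :: "'a::comm_ring_1 mat"
  assumes sw: "(\<Sum>m\<in>{0..<N}. w m) = 1"
    and alt: "(\<forall>i<N. \<forall>j<N. P $$ (i, j) = w i * w j) \<or> (\<exists>i<N. (\<Sum>j\<in>{0..<N}. P $$ (i, j)) \<noteq> w i)"
  shows "mat N N (\<lambda>(i, j). P $$ (i, j) - w i * w j) = 0\<^sub>m N N \<or>
    \<not> row_sums_vanish N (mat N N (\<lambda>(i, j). P $$ (i, j) - w i * w j))"
proof (rule disjCI)
  assume "\<not> \<not> row_sums_vanish N (mat N N (\<lambda>(i, j). P $$ (i, j) - w i * w j))"
  hence "(\<Sum>j\<in>{0..<N}. P $$ (i, j)) = w i" if "i < N" for i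
    using that sw by (auto simp: row_sums_vanish_def sum_subtractf sum_distrib_left[symmetric])
  with alt show "mat N N (\<lambda>(i, j). P $$ (i, j) - w i * w j) = 0\<^sub>m N N" by auto
qed

lemma orthonormal_columns_le:
  fixes W :: "'f::field mat"
  assumes "orthonormal_columns N k W"
  shows "k \<le> N"
  using assms left_invertible_dim_le[of W N k "transpose_mat W"] by (auto simp: orthonormal_columns_def)

lemma symmetric_idempotent_orthonormal_extension:
  fixes P :: "'f::field mat"
  assumes ch: "CHAR('f) = 2"
  shows "symmetric_idempotent N P \<Longrightarrow> P = 0\<^sub>m N N \<or> \<not> row_sums_vanish N P \<Longrightarrow>
    orthonormal_columns N k W \<Longrightarrow>
    (\<And>i a. i < N \<Longrightarrow> a < k \<Longrightarrow> (\<Sum>m\<in>{0..<N}. P $$ (i, m) * W $$ (m, a)) = 0) \<Longrightarrow>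
    \<exists>r Q. orthonormal_columns N r Q \<and> (\<forall>i<N. \<forall>j<N.
      (\<Sum>a\<in>{0..<r}. Q $$ (i, a) * Q $$ (j, a)) = (\<Sum>a\<in>{0..<k}. W $$ (i, a) * W $$ (j, a)) + P $$ (i, j))"
proof (induction "N - k" arbitrary: k W P rule: less_induct)
  case less
  note si = less.prems(1) and W = less.prems(3) and PW = less.prems(4)
  show ?case
  proof (cases "P = 0\<^sub>m N N")
    case True
    thus ?thesis using W by (intro exI[of _ k] exI[of _ W]) auto
  next
    case False
    with less.prems(2) have nv: "\<not> row_sums_vanish N P" by simp
    have sym: "\<And>i j. i < N \<Longrightarrow> j < N \<Longrightarrow> P $$ (j, i) = P $$ (i, j)"
      using si by (auto simp: symmetric_idempotent_iff)
    obtain w where Pw: "\<And>i. i < N \<Longrightarrow> (\<Sum>m\<in>{0..<N}. P $$ (i, m) * w m) = w i"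
      and sw: "(\<Sum>m\<in>{0..<N}. w m) = 1"
      and alt: "(\<forall>i<N. \<forall>j<N. P $$ (i, j) = w i * w j) \<or> (\<exists>i<N. (\<Sum>j\<in>{0..<N}. P $$ (i, j)) \<noteq> w i)"
      using symmetric_idempotent_fixed_unit_vector[OF ch si nv] by blast
    have ww: "(\<Sum>m\<in>{0..<N}. w m * w m) = 1" using CHAR_2_sum_squares[OF ch, of w] sw by simp
    have Ww: "(\<Sum>i\<in>{0..<N}. W $$ (i, a) * w i) = 0" if "a < k" for a
      using symmetric_fixed_orthogonal_kernel[OF sym Pw PW[OF _ that]] .
    define W' where "W' = mat N (Suc k) (\<lambda>(i, a). if a < k then W $$ (i, a) else w i)"
    define P' where "P' = mat N N (\<lambda>(i, j). P $$ (i, j) - w i * w j)"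
    have W': "orthonormal_columns N (Suc k) W'"
      unfolding W'_def using orthonormal_columns_append[OF W ww Ww] .
    have si': "symmetric_idempotent N P'"
      unfolding P'_def using symmetric_idempotent_deflate[OF si Pw ww] .
    have "P' = 0\<^sub>m N N \<or> \<not> row_sums_vanish N P'"
      unfolding P'_def using deflate_row_sums[OF sw alt] .
    moreover have "(\<Sum>m\<in>{0..<N}. P' $$ (i, m) * W' $$ (m, a)) = 0" if "i < N" "a < Suc k" for i a
      unfolding P'_def W'_def using deflate_kernel_append[OF Pw ww PW Ww that] .
    moreover have "N - Suc k < N - k" using orthonormal_columns_le[OF W'] by simp
    ultimately obtain r Q where Q: "orthonormal_columns N r Q"
      and QQ: "\<forall>i<N. \<forall>j<N. (\<Sum>a\<in>{0..<r}. Q $$ (i, a) * Q $$ (j, a)) =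
        (\<Sum>a\<in>{0..<Suc k}. W' $$ (i, a) * W' $$ (j, a)) + P' $$ (i, j)"
      using less.hyps[OF _ si' _ W'] by blast
    have "(\<Sum>a\<in>{0..<Suc k}. W' $$ (i, a) * W' $$ (j, a)) + P' $$ (i, j) =
        (\<Sum>a\<in>{0..<k}. W $$ (i, a) * W $$ (j, a)) + P $$ (i, j)" if "i < N" "j < N" for i j
      using that by (simp add: W'_def P'_def)
    with Q QQ show ?thesis by auto
  qed
qed

lemma symmetric_idempotent_factor:
  fixes P :: "'f::field mat"
  assumes ch: "CHAR('f) = 2" and si: "symmetric_idempotent N P" and nv: "\<not> row_sums_vanish N P"
  shows "\<exists>r Q. Q \<in> carrier_mat N r \<and> transpose_mat Q * Q = 1\<^sub>m r \<and> Q * transpose_mat Q = P"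
proof -
  have W0: "orthonormal_columns N 0 (0\<^sub>m N 0 :: 'f mat)" by (simp add: orthonormal_columns_iff)
  obtain r Q where Q: "orthonormal_columns N r Q"
    and QQ: "\<forall>i<N. \<forall>j<N. (\<Sum>a\<in>{0..<r}. Q $$ (i, a) * Q $$ (j, a)) = P $$ (i, j)"
    using symmetric_idempotent_orthonormal_extension[OF ch si _ W0] nv by fastforce
  have Qc: "Q \<in> carrier_mat N r" and Pc: "P \<in> carrier_mat N N"
    using Q si by (auto simp: orthonormal_columns_def symmetric_idempotent_def)
  have "Q * transpose_mat Q = P"
  proof (rule eq_matI)
    fix i j assume "i < dim_row P" "j < dim_col P"
    hence i: "i < N" and j: "j < N" using Pc by auto
    have "(Q * transpose_mat Q) $$ (i, j) = (\<Sum>a\<in>{0..<r}. Q $$ (i, a) * transpose_mat Q $$ (a, j))"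
      using Qc i j by (intro index_mult_mat_sum) auto
    also have "\<dots> = P $$ (i, j)" using QQ Qc i j by (auto intro!: sum.cong)
    finally show "(Q * transpose_mat Q) $$ (i, j) = P $$ (i, j)" .
  qed (use Qc Pc in auto)
  with Q show ?thesis by (auto simp: orthonormal_columns_def)
qed

lemma CHAR_2_add_mat_eq_0:
  fixes A B :: "'f::field mat"
  assumes ch: "CHAR('f) = 2" and A: "A \<in> carrier_mat n m" and B: "B \<in> carrier_mat n m"
    and AB: "A + B = 0\<^sub>m n m"
  shows "A = B"
proof (rule eq_matI)
  fix i j assume "i < dim_row B" "j < dim_col B"
  hence "A $$ (i, j) + B $$ (i, j) = 0" using arg_cong[OF AB, of "\<lambda>M. M $$ (i, j)"] A B by simp
  thus "A $$ (i, j) = B $$ (i, j)" using CHAR_2_uminus[OF ch] by (simp add: add_eq_0_iff2)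
qed (use A B in auto)

lemma idempotent_sandwich:
  assumes P: "P \<in> carrier_mat n n" and X: "X \<in> carrier_mat n n" and PP: "P * P = P"
  shows "P * (P * X * P) * P = P * X * P"
proof -
  have "P * (P * X * P) = (P * P) * X * P"
    by (simp only: assoc_mult_mat[OF P X P] assoc_mult_mat[OF P P mult_carrier_mat[OF X P]]
        assoc_mult_mat[OF mult_carrier_mat[OF P P] X P])
  moreover have "P * X * P * P = P * X * (P * P)"
    by (rule assoc_mult_mat[OF mult_carrier_mat[OF P X] P P])
  ultimately show ?thesis using PP by simp
qed

text \<open>With \<open>D\<close> strictly upper triangular, \<open>D + D\<^sup>T + 1\<close> is the all-ones matrix \<open>J\<close>, and \<open>P J = 0\<close>.
  So \<open>Y = P D P\<close> satisfies \<open>Y + Y\<^sup>T + P = 0\<close>.\<close>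
lemma row_sums_vanish_alternating_corner:
  fixes P :: "'f::field mat"
  assumes ch: "CHAR('f) = 2" and si: "symmetric_idempotent N P" and rv: "row_sums_vanish N P"
  shows "\<exists>Y\<in>carrier_mat N N. P * Y * P = Y \<and> Y + transpose_mat Y = P"
proof -
  have P: "P \<in> carrier_mat N N" and Pt: "transpose_mat P = P" and PP: "P * P = P"
    using si by (auto simp: symmetric_idempotent_def)
  define J where "J = mat N N (\<lambda>_. 1::'f)"
  define D where "D = mat N N (\<lambda>(i, j). if i < j then 1::'f else 0)"
  have J: "J \<in> carrier_mat N N" and D: "D \<in> carrier_mat N N" unfolding J_def D_def by auto
  have DJ: "D + transpose_mat D + 1\<^sub>m N = J" by (auto simp: D_def J_def)
  have PJ: "P * J = 0\<^sub>m N N"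
  proof (rule eq_matI)
    fix i j assume i: "i < dim_row (0\<^sub>m N N :: 'f mat)" and j: "j < dim_col (0\<^sub>m N N :: 'f mat)"
    have "(P * J) $$ (i, j) = (\<Sum>m\<in>{0..<N}. P $$ (i, m) * J $$ (m, j))"
      using P J i j by (intro index_mult_mat_sum) auto
    also have "\<dots> = 0" using rv i j by (simp add: J_def row_sums_vanish_def)
    finally show "(P * J) $$ (i, j) = 0\<^sub>m N N $$ (i, j)" using i j by simp
  qed (use P J in auto)
  define Y where "Y = P * D * P"
  have Y: "Y \<in> carrier_mat N N" unfolding Y_def using P D by simp
  have "transpose_mat Y = P * transpose_mat D * P"
    unfolding Y_def using P D
    by (simp only: transpose_mult[OF mult_carrier_mat[OF P D] P] transpose_mult[OF P D] Pt) simp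
  hence "Y + transpose_mat Y + P = P * J * P"
    unfolding Y_def DJ[symmetric] using P D PP by (simp add: sandwich_add_mat assoc_add_mat[of _ N N])
  also have "\<dots> = 0\<^sub>m N N" using PJ P by simp
  finally have "Y + transpose_mat Y + P = 0\<^sub>m N N" .
  hence "Y + transpose_mat Y = P" using CHAR_2_add_mat_eq_0[OF ch _ P] Y by simp
  moreover have "P * Y * P = Y" unfolding Y_def using idempotent_sandwich[OF P D PP] .
  ultimately show ?thesis using Y by blast
qed

section \<open>Corners of matrix algebras\<close>

definition corner_representation ::
  "('f::field \<Rightarrow> 'a::ring_1 \<Rightarrow> 'a) \<Rightarrow> ('a \<Rightarrow> 'a) \<Rightarrow> nat \<Rightarrow> 'f mat \<Rightarrow> ('a \<Rightarrow> 'f mat) \<Rightarrow> bool" where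
  "corner_representation sm \<sigma> N P \<psi> \<longleftrightarrow>
     inj \<psi> \<and> range \<psi> = {Y \<in> carrier_mat N N. P * Y * P = Y} \<and> \<psi> 1 = P \<and>
     (\<forall>a b. \<psi> (a + b) = \<psi> a + \<psi> b \<and> \<psi> (a * b) = \<psi> a * \<psi> b) \<and>
     (\<forall>c a. \<psi> (sm c a) = c \<cdot>\<^sub>m \<psi> a) \<and> (\<forall>a. \<psi> (\<sigma> a) = transpose_mat (\<psi> a))"

lemma corner_representation_carrier:
  assumes "corner_representation sm \<sigma> N P \<psi>"
  shows "\<psi> a \<in> carrier_mat N N"
  using assms rangeI[of \<psi> a] unfolding corner_representation_def by blast

lemma involution_first_kind_one:
  assumes "involution_first_kind sm \<sigma>"
  shows "\<sigma> 1 = 1"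
proof -
  have "\<sigma> (\<sigma> 1 * 1) = \<sigma> 1 * \<sigma> (\<sigma> 1)" and "\<sigma> (\<sigma> 1) = 1"
    using assms unfolding involution_first_kind_def by blast+
  thus ?thesis by simp
qed

lemma corner_representation_symmetric_idempotent:
  assumes rep: "corner_representation sm \<sigma> N P \<psi>" and \<sigma>1: "\<sigma> 1 = 1"
  shows "symmetric_idempotent N P"
proof -
  have "\<psi> 1 = P" and "\<psi> (1 * 1) = \<psi> 1 * \<psi> 1" and "\<psi> (\<sigma> 1) = transpose_mat (\<psi> 1)"
    using rep unfolding corner_representation_def by blast+
  with \<sigma>1 corner_representation_carrier[OF rep, of 1] show ?thesis
    unfolding symmetric_idempotent_def by simp
qed

lemma corner_representation_not_row_sums_vanish:
  assumes ch: "CHAR('f::field) = 2" and rep: "corner_representation sm \<sigma> N (P::'f mat) \<psi>"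
    and \<sigma>1: "\<sigma> 1 = 1" and orth: "\<And>x. x + \<sigma> x \<noteq> 1"
  shows "\<not> row_sums_vanish N P"
proof
  assume "row_sums_vanish N P"
  then obtain Y where "Y \<in> carrier_mat N N" "P * Y * P = Y" and Y: "Y + transpose_mat Y = P"
    using row_sums_vanish_alternating_corner[OF ch corner_representation_symmetric_idempotent[OF rep \<sigma>1]]
    by blast
  hence "Y \<in> range \<psi>" using rep unfolding corner_representation_def by blast
  then obtain a where a: "\<psi> a = Y" by (metis rangeE)
  have "\<psi> (a + \<sigma> a) = \<psi> 1" using rep Y a unfolding corner_representation_def by simp
  hence "a + \<sigma> a = 1" using rep unfolding corner_representation_def inj_def by blast
  with orth show False by blast
qed

locale isometry_frame =
  fixes Q P :: "'f::field mat" and N r :: nat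
  assumes Q: "Q \<in> carrier_mat N r"
    and isometry: "transpose_mat Q * Q = 1\<^sub>m r" and projection: "Q * transpose_mat Q = P"
begin

lemma Qt: "transpose_mat Q \<in> carrier_mat r N" using Q by simp

lemma P: "P \<in> carrier_mat N N" using projection Q by auto

lemma compress_carrier: "Y \<in> carrier_mat N N \<Longrightarrow> transpose_mat Q * Y * Q \<in> carrier_mat r r"
  using Q by simp

lemma Qt_P: "transpose_mat Q * P = transpose_mat Q"
  unfolding projection[symmetric] using assoc_mult_mat[OF Qt Q Qt, symmetric] isometry Qt by simp

lemma P_Q: "P * Q = Q"
  unfolding projection[symmetric] using assoc_mult_mat[OF Q Qt Q] isometry Q by simp

lemma expand_compress:
  assumes Y: "Y \<in> carrier_mat N N" and PY: "P * Y = Y" and YP: "Y * P = Y"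
  shows "Q * (transpose_mat Q * Y * Q) * transpose_mat Q = Y"
proof -
  have "Q * (transpose_mat Q * Y * Q) * transpose_mat Q = (Q * transpose_mat Q) * Y * (Q * transpose_mat Q)"
    using Q Qt Y
    by (simp only: assoc_mult_mat[OF Q mult_carrier_mat[OF mult_carrier_mat[OF Qt Y] Q] Qt]
       assoc_mult_mat[OF mult_carrier_mat[OF Qt Y] Q Qt] assoc_mult_mat[OF Qt Y mult_carrier_mat[OF Q Qt]]
       assoc_mult_mat[OF mult_carrier_mat[OF Q Qt] Y mult_carrier_mat[OF Q Qt]]
       assoc_mult_mat[OF Q Qt mult_carrier_mat[OF Y mult_carrier_mat[OF Q Qt]]])
  also have "\<dots> = Y" using projection PY YP by simp
  finally show ?thesis .
qed

lemma compress_expand: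
  assumes Z: "Z \<in> carrier_mat r r"
  shows "transpose_mat Q * (Q * Z * transpose_mat Q) * Q = Z"
proof -
  have "transpose_mat Q * (Q * Z * transpose_mat Q) * Q = (transpose_mat Q * Q) * Z * (transpose_mat Q * Q)"
    using Q Qt Z
    by (simp only: assoc_mult_mat[OF Qt mult_carrier_mat[OF mult_carrier_mat[OF Q Z] Qt] Q]
       assoc_mult_mat[OF mult_carrier_mat[OF Q Z] Qt Q] assoc_mult_mat[OF Q Z mult_carrier_mat[OF Qt Q]]
       assoc_mult_mat[OF mult_carrier_mat[OF Qt Q] Z mult_carrier_mat[OF Qt Q]]
       assoc_mult_mat[OF Qt Q mult_carrier_mat[OF Z mult_carrier_mat[OF Qt Q]]])
  also have "\<dots> = Z" using isometry Z by simp
  finally show ?thesis .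
qed

lemma expand_in_corner:
  assumes Z: "Z \<in> carrier_mat r r"
  shows "P * (Q * Z * transpose_mat Q) * P = Q * Z * transpose_mat Q"
proof -
  have "P * (Q * Z * transpose_mat Q) * P = (P * Q) * Z * (transpose_mat Q * P)"
    using Q Qt Z P
    by (simp only: assoc_mult_mat[OF P mult_carrier_mat[OF mult_carrier_mat[OF Q Z] Qt] P]
       assoc_mult_mat[OF mult_carrier_mat[OF Q Z] Qt P] assoc_mult_mat[OF Q Z mult_carrier_mat[OF Qt P]]
       assoc_mult_mat[OF mult_carrier_mat[OF P Q] Z mult_carrier_mat[OF Qt P]]
       assoc_mult_mat[OF P Q mult_carrier_mat[OF Z mult_carrier_mat[OF Qt P]]])
  also have "\<dots> = Q * Z * transpose_mat Q" using P_Q Qt_P by simp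
  finally show ?thesis .
qed

lemma compress_mult:
  assumes Y1: "Y1 \<in> carrier_mat N N" and Y2: "Y2 \<in> carrier_mat N N" and Y1P: "Y1 * P = Y1"
  shows "transpose_mat Q * (Y1 * Y2) * Q = (transpose_mat Q * Y1 * Q) * (transpose_mat Q * Y2 * Q)"
proof -
  have "(transpose_mat Q * Y1 * Q) * (transpose_mat Q * Y2 * Q) =
      transpose_mat Q * (Y1 * (Q * transpose_mat Q) * Y2) * Q"
    using Q Qt Y1 Y2
    by (simp only: assoc_mult_mat[OF Qt Y1 Q] assoc_mult_mat[OF Qt Y2 Q]
      assoc_mult_mat[OF Qt mult_carrier_mat[OF Y1 Q] mult_carrier_mat[OF Qt mult_carrier_mat[OF Y2 Q]]]
      assoc_mult_mat[OF Y1 Q mult_carrier_mat[OF Qt mult_carrier_mat[OF Y2 Q]]]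
      assoc_mult_mat[OF Qt mult_carrier_mat[OF mult_carrier_mat[OF Y1 mult_carrier_mat[OF Q Qt]] Y2] Q]
      assoc_mult_mat[OF mult_carrier_mat[OF Y1 mult_carrier_mat[OF Q Qt]] Y2 Q]
      assoc_mult_mat[OF Y1 mult_carrier_mat[OF Q Qt] mult_carrier_mat[OF Y2 Q]]
      assoc_mult_mat[OF Q Qt mult_carrier_mat[OF Y2 Q]])
  thus ?thesis using projection Y1P by simp
qed

lemma compress_add:
  assumes "Y1 \<in> carrier_mat N N" and "Y2 \<in> carrier_mat N N"
  shows "transpose_mat Q * (Y1 + Y2) * Q = transpose_mat Q * Y1 * Q + transpose_mat Q * Y2 * Q"
  using mult_add_distrib_mat[OF Qt assms]
    add_mult_distrib_mat[OF mult_carrier_mat[OF Qt assms(1)] mult_carrier_mat[OF Qt assms(2)] Q]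
  by simp

lemma compress_smult:
  assumes "Y \<in> carrier_mat N N"
  shows "transpose_mat Q * (c \<cdot>\<^sub>m Y) * Q = c \<cdot>\<^sub>m (transpose_mat Q * Y * Q)"
  using mult_smult_distrib[OF Qt assms] mult_smult_assoc_mat[OF mult_carrier_mat[OF Qt assms] Q] by simp

lemma compress_transpose:
  assumes Y: "Y \<in> carrier_mat N N"
  shows "transpose_mat Q * transpose_mat Y * Q = transpose_mat (transpose_mat Q * Y * Q)"
  using transpose_mult[OF mult_carrier_mat[OF Qt Y] Q] transpose_mult[OF Qt Y] Q Y
    assoc_mult_mat[OF Qt transpose_carrier_mat[THEN iffD2, OF Y] Q] by simp

text \<open>\<open>U\<close> and \<open>W\<close> make \<open>P\<close> and \<open>1 - P\<close> equivalent idempotents; then \<open>[Q\<^sup>T; Q\<^sup>T U]\<close> and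
  \<open>[Q, W Q]\<close> are mutually inverse \<open>2r \<times> N\<close> and \<open>N \<times> 2r\<close> matrices.\<close>
lemma dim_eq_double:
  assumes U: "U \<in> carrier_mat N N" and W: "W \<in> carrier_mat N N"
    and UW: "U * W = P" and WUP: "W * U + P = 1\<^sub>m N" and PW: "P * W = 0\<^sub>m N N" and UP: "U * P = 0\<^sub>m N N"
  shows "N = r + r"
proof -
  define L where "L = four_block_mat (transpose_mat Q) (0\<^sub>m r 0) (transpose_mat Q * U) (0\<^sub>m r 0)"
  define M where "M = four_block_mat Q (W * Q) (0\<^sub>m 0 r) (0\<^sub>m 0 r)"
  have L: "L \<in> carrier_mat (r + r) (N + 0)" unfolding L_def using Qt U by (intro four_block_carrier_mat) auto
  have M: "M \<in> carrier_mat (N + 0) (r + r)" unfolding M_def using Q W by (intro four_block_carrier_mat) auto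
  have "transpose_mat Q * (W * Q) = transpose_mat Q * ((P * W) * Q)"
    using Qt_P assoc_mult_mat[OF Qt P mult_carrier_mat[OF W Q]] assoc_mult_mat[OF P W Q] by simp
  hence a1: "transpose_mat Q * (W * Q) = 0\<^sub>m r r" using PW Qt Q by simp
  have "transpose_mat Q * U * Q = transpose_mat Q * ((U * P) * Q)"
    using P_Q assoc_mult_mat[OF Qt U mult_carrier_mat[OF P Q]] assoc_mult_mat[OF U P Q]
      assoc_mult_mat[OF mult_carrier_mat[OF Qt U] P Q] by simp
  hence a2: "transpose_mat Q * U * Q = 0\<^sub>m r r" using UP Qt Q by simp
  have "transpose_mat Q * U * (W * Q) = transpose_mat Q * ((U * W) * Q)"
    using assoc_mult_mat[OF Qt U mult_carrier_mat[OF W Q]] assoc_mult_mat[OF U W Q] by simp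
  hence a3: "transpose_mat Q * U * (W * Q) = 1\<^sub>m r" using UW P_Q isometry by simp
  have "L * M = four_block_mat (transpose_mat Q * Q + 0\<^sub>m r 0 * 0\<^sub>m 0 r) (transpose_mat Q * (W * Q) + 0\<^sub>m r 0 * 0\<^sub>m 0 r)
     (transpose_mat Q * U * Q + 0\<^sub>m r 0 * 0\<^sub>m 0 r) (transpose_mat Q * U * (W * Q) + 0\<^sub>m r 0 * 0\<^sub>m 0 r)"
    unfolding L_def M_def using Q Qt U W by (intro mult_four_block_mat) auto
  also have "\<dots> = 1\<^sub>m (r + r)" using isometry a1 a2 a3 by simp
  finally have LMI: "L * M = 1\<^sub>m (r + r)" .
  have "P * (W * U) = 0\<^sub>m N N" using PW assoc_mult_mat[OF P W U] W U by simp
  hence "(W * U + P) * (W * U) = W * U * (W * U)"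
    using add_mult_distrib_mat[OF mult_carrier_mat[OF W U] P mult_carrier_mat[OF W U]]
      right_add_zero_mat[OF mult_carrier_mat[OF mult_carrier_mat[OF W U] mult_carrier_mat[OF W U]]] by simp
  hence WU: "W * U * (W * U) = W * U" using WUP W U by simp
  have "W * Q * (transpose_mat Q * U) = W * (U * W) * U"
    using UW projection assoc_mult_mat[OF W Q mult_carrier_mat[OF Qt U]] assoc_mult_mat[OF Q Qt U]
      assoc_mult_mat[OF W mult_carrier_mat[OF Q Qt] U] by simp
  also have "\<dots> = W * U * (W * U)"
    using assoc_mult_mat[OF W mult_carrier_mat[OF U W] U] assoc_mult_mat[OF W U W]
      assoc_mult_mat[OF mult_carrier_mat[OF W U] W U] by simp
  finally have b1: "Q * transpose_mat Q + W * Q * (transpose_mat Q * U) = 1\<^sub>m N"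
    using WU projection WUP comm_add_mat[OF P mult_carrier_mat[OF W U]] by simp
  have "M * L = four_block_mat (Q * transpose_mat Q + W * Q * (transpose_mat Q * U)) (Q * 0\<^sub>m r 0 + W * Q * 0\<^sub>m r 0)
     (0\<^sub>m 0 r * transpose_mat Q + 0\<^sub>m 0 r * (transpose_mat Q * U)) (0\<^sub>m 0 r * 0\<^sub>m r 0 + 0\<^sub>m 0 r * 0\<^sub>m r 0)"
    unfolding L_def M_def using Q Qt U W by (intro mult_four_block_mat) auto
  also have "\<dots> = four_block_mat (1\<^sub>m N) (0\<^sub>m N 0) (0\<^sub>m 0 N) (1\<^sub>m 0)"
    using b1 Q Qt U W by (intro cong_four_block_mat) auto
  also have "\<dots> = 1\<^sub>m (N + 0)" by (rule four_block_one_mat)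
  finally have MLI: "M * L = 1\<^sub>m (N + 0)" .
  show ?thesis using left_invertible_dim_le[OF M L LMI] left_invertible_dim_le[OF L M MLI] by simp
qed

lemma alg_inv_iso_corner_representation:
  assumes rep: "corner_representation sm \<sigma> N P \<psi>"
  shows "alg_inv_iso UNIV (+) (*) sm \<sigma> (carrier_mat r r) (+) (*) (\<lambda>c M. c \<cdot>\<^sub>m M) transpose_mat"
proof -
  note \<psi>c = corner_representation_carrier[OF rep]
  have \<psi>P: "P * \<psi> a = \<psi> a" "\<psi> a * P = \<psi> a" for a
    using rep unfolding corner_representation_def by (metis mult_1_left mult_1_right)+
  define \<phi> where "\<phi> a = transpose_mat Q * \<psi> a * Q" for a
  have "inj \<phi>"
  proof (rule injI)
    fix a b assume "\<phi> a = \<phi> b"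
    hence "\<psi> a = \<psi> b" unfolding \<phi>_def using expand_compress[OF \<psi>c \<psi>P] by metis
    thus "a = b" using rep unfolding corner_representation_def inj_def by blast
  qed
  moreover have "range \<phi> = carrier_mat r r"
  proof
    show "range \<phi> \<subseteq> carrier_mat r r" unfolding \<phi>_def using compress_carrier[OF \<psi>c] by auto
    show "carrier_mat r r \<subseteq> range \<phi>"
    proof
      fix Z :: "'f mat" assume Z: "Z \<in> carrier_mat r r"
      have "Q * Z * transpose_mat Q \<in> range \<psi>"
        using rep expand_in_corner[OF Z] Q Z unfolding corner_representation_def by auto
      then obtain a where "\<psi> a = Q * Z * transpose_mat Q" by (metis rangeE)
      hence "\<phi> a = Z" unfolding \<phi>_def using compress_expand[OF Z] by simp
      thus "Z \<in> range \<phi>" by blast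
    qed
  qed
  moreover have "\<phi> (a + b) = \<phi> a + \<phi> b" "\<phi> (a * b) = \<phi> a * \<phi> b"
    "\<phi> (sm c a) = c \<cdot>\<^sub>m \<phi> a" "\<phi> (\<sigma> a) = transpose_mat (\<phi> a)" for a b c
    using rep compress_add[OF \<psi>c \<psi>c] compress_mult[OF \<psi>c \<psi>c \<psi>P(2)]
      compress_smult[OF \<psi>c] compress_transpose[OF \<psi>c]
    unfolding \<phi>_def corner_representation_def by simp_all
  ultimately show ?thesis unfolding alg_inv_iso_def bij_betw_def by blast
qed

end

section \<open>Orthogonal involutions on \<open>M\<^sub>2(F)\<close>\<close>

lemma mat2_eq_iff:
  assumes "A \<in> carrier_mat 2 2" "B \<in> carrier_mat 2 2"
  shows "A = B \<longleftrightarrow> A $$ (0, 0) = B $$ (0, 0) \<and> A $$ (0, 1) = B $$ (0, 1) \<and>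
    A $$ (1, 0) = B $$ (1, 0) \<and> A $$ (1, 1) = B $$ (1, 1)"
  using assms by (auto intro!: eq_matI simp: less_2_cases_iff)

lemma index_mult_mat_2:
  assumes "A \<in> carrier_mat 2 2" "B \<in> carrier_mat 2 2" "i < 2" "j < 2"
  shows "(A * B) $$ (i, j) = A $$ (i, 0) * B $$ (0, j) + A $$ (i, 1) * B $$ (1, j)"
  using index_mult_mat_sum[OF assms] by (simp add: numeral_2_eq_2)

lemma unit2_carrier [simp]: "unit2 i j \<in> carrier_mat 2 2"
  unfolding unit2_def by simp

lemma unit2_dims [simp]: "dim_row (unit2 i j) = 2" "dim_col (unit2 i j) = 2"
  unfolding unit2_def by auto

lemma unit2_index [simp]:
  "k < 2 \<Longrightarrow> l < 2 \<Longrightarrow> (unit2 i j :: 'f::field mat) $$ (k, l) = (if k = i \<and> l = j then 1 else 0)"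
  unfolding unit2_def by simp

lemma unit2_mult:
  "i < 2 \<Longrightarrow> j < 2 \<Longrightarrow> k < 2 \<Longrightarrow> l < 2 \<Longrightarrow>
   (unit2 i j :: 'f::field mat) * unit2 k l = (if j = k then unit2 i l else 0\<^sub>m 2 2)"
  by (subst mat2_eq_iff) (auto simp: index_mult_mat_2 simp del: index_mult_mat(1))

lemma mat_orthogonal_involutionD:
  assumes "mat_orthogonal_involution m \<tau>"
  shows "x \<in> carrier_mat m m \<Longrightarrow> \<tau> x \<in> carrier_mat m m"
    and "x \<in> carrier_mat m m \<Longrightarrow> y \<in> carrier_mat m m \<Longrightarrow> \<tau> (x + y) = \<tau> x + \<tau> y"
    and "x \<in> carrier_mat m m \<Longrightarrow> y \<in> carrier_mat m m \<Longrightarrow> \<tau> (x * y) = \<tau> y * \<tau> x"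
    and "x \<in> carrier_mat m m \<Longrightarrow> \<tau> (\<tau> x) = x"
    and "x \<in> carrier_mat m m \<Longrightarrow> \<tau> (c \<cdot>\<^sub>m x) = c \<cdot>\<^sub>m \<tau> x"
    and "x \<in> carrier_mat m m \<Longrightarrow> x + \<tau> x \<noteq> 1\<^sub>m m"
  using assms unfolding mat_orthogonal_involution_def by auto

lemma mat_orthogonal_involution_one:
  fixes \<tau> :: "'f::field mat \<Rightarrow> 'f mat"
  assumes "mat_orthogonal_involution m \<tau>"
  shows "\<tau> (1\<^sub>m m) = 1\<^sub>m m"
proof -
  note \<tau> = mat_orthogonal_involutionD[OF assms]
  have one: "1\<^sub>m m \<in> carrier_mat m m" by simp
  have "\<tau> (\<tau> (1\<^sub>m m) * 1\<^sub>m m) = \<tau> (1\<^sub>m m) * 1\<^sub>m m"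
    using \<tau>(3)[OF \<tau>(1)[OF one] one] \<tau>(4)[OF one] by simp
  thus ?thesis using \<tau>(1)[OF one] \<tau>(4)[OF one] by simp
qed

lemma mat_orthogonal_involution_zero:
  fixes \<tau> :: "'f::field mat \<Rightarrow> 'f mat"
  assumes "mat_orthogonal_involution m \<tau>"
  shows "\<tau> (0\<^sub>m m m) = 0\<^sub>m m m"
proof -
  have "\<tau> (0 \<cdot>\<^sub>m 1\<^sub>m m) = 0 \<cdot>\<^sub>m (1\<^sub>m m :: 'f mat)"
    using mat_orthogonal_involutionD(5)[OF assms, of "1\<^sub>m m" 0] mat_orthogonal_involution_one[OF assms]
    by simp
  moreover have "0 \<cdot>\<^sub>m (1\<^sub>m m :: 'f mat) = 0\<^sub>m m m" by auto
  ultimately show ?thesis by simp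
qed

text \<open>\<open>T i j\<close> stands for \<open>\<tau> e\<^sub>i\<^sub>j\<close>: an anti-automorphism multiplies matrix units in reverse order.\<close>
lemma reversed_matrix_units_2:
  fixes T :: "nat \<Rightarrow> nat \<Rightarrow> 'f::field mat"
  assumes Tc: "\<And>i j. T i j \<in> carrier_mat 2 2"
    and Tm: "\<And>i j k l. i < 2 \<Longrightarrow> j < 2 \<Longrightarrow> k < 2 \<Longrightarrow> l < 2 \<Longrightarrow>
      T k l * T i j = (if j = k then T i l else 0\<^sub>m 2 2)"
    and nz: "\<And>i j. i < 2 \<Longrightarrow> j < 2 \<Longrightarrow> T i j \<noteq> 0\<^sub>m 2 2"
    and sum: "T 0 0 + T 1 1 = 1\<^sub>m 2"
    and transposed_zero: "\<And>i j. i < 2 \<Longrightarrow> j < 2 \<Longrightarrow> T i j $$ (j, i) = 0"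
  shows "T 0 0 = unit2 1 1"
proof -
  note mult = index_mult_mat_2[OF Tc Tc]
  have a: "T 0 0 $$ (0, 0) = 0" using transposed_zero[of 0 0] by simp
  have d: "T 0 0 $$ (1, 1) = 1"
    using arg_cong[OF sum, of "\<lambda>M. M $$ (1, 1)"] transposed_zero[of 1 1] Tc[of 0 0] Tc[of 1 1] by simp
  have "(T 0 0 * T 0 0) $$ (0, 0) = T 0 0 $$ (0, 0)" using Tm[of 0 0 0 0] by simp
  hence bc: "T 0 0 $$ (0, 1) * T 0 0 $$ (1, 0) = 0" using a by (simp add: mult del: index_mult_mat(1))
  have b: "T 0 0 $$ (0, 1) = 0"
  proof (rule ccontr)
    assume b: "T 0 0 $$ (0, 1) \<noteq> 0"
    have x: "(T 1 0 * T 0 0) $$ (k, l) = 0" if "k < 2" "l < 2" for k l using Tm[of 0 0 1 0] that by simp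
    have y: "(T 0 0 * T 1 0) $$ (k, l) = T 1 0 $$ (k, l)" for k l using Tm[of 1 0 0 0] by simp
    have \<beta>: "T 1 0 $$ (0, 1) = 0" using transposed_zero[of 1 0] by simp
    have \<alpha>: "T 1 0 $$ (0, 0) = 0" using x[of 0 1] b \<beta> by (simp add: mult del: index_mult_mat(1))
    have \<gamma>: "T 1 0 $$ (1, 0) = 0" using y[of 0 0] \<alpha> a b by (simp add: mult del: index_mult_mat(1))
    have \<delta>: "T 1 0 $$ (1, 1) = 0"
      using x[of 1 1] \<gamma> d bc b by (simp add: mult del: index_mult_mat(1))
    have "T 1 0 = 0\<^sub>m 2 2" using \<alpha> \<beta> \<gamma> \<delta> Tc[of 1 0] by (subst mat2_eq_iff) auto
    with nz[of 1 0] show False by simp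
  qed
  have c: "T 0 0 $$ (1, 0) = 0"
  proof (rule ccontr)
    assume c: "T 0 0 $$ (1, 0) \<noteq> 0"
    have x: "(T 0 0 * T 0 1) $$ (k, l) = 0" if "k < 2" "l < 2" for k l using Tm[of 0 1 0 0] that by simp
    have y: "(T 0 1 * T 0 0) $$ (k, l) = T 0 1 $$ (k, l)" for k l using Tm[of 0 0 0 1] by simp
    have \<gamma>: "T 0 1 $$ (1, 0) = 0" using transposed_zero[of 0 1] by simp
    have \<alpha>: "T 0 1 $$ (0, 0) = 0" using x[of 1 0] c \<gamma> a by (simp add: mult del: index_mult_mat(1))
    have \<delta>: "T 0 1 $$ (1, 1) = 0" using y[of 1 0] c \<gamma> a by (simp add: mult del: index_mult_mat(1))
    have \<beta>: "T 0 1 $$ (0, 1) = 0" using x[of 1 1] c \<delta> d by (simp add: mult del: index_mult_mat(1))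
    have "T 0 1 = 0\<^sub>m 2 2" using \<alpha> \<beta> \<gamma> \<delta> Tc[of 0 1] by (subst mat2_eq_iff) auto
    with nz[of 0 1] show False by simp
  qed
  show ?thesis using a b c d Tc[of 0 0] by (subst mat2_eq_iff) auto
qed

lemma mat_orthogonal_involution_2_transposed_entry:
  assumes \<tau>: "mat_orthogonal_involution 2 (\<tau> :: 'f::field mat \<Rightarrow> 'f mat)"
  shows "\<exists>i<2. \<exists>j<2. \<tau> (unit2 i j) $$ (j, i) \<noteq> 0"
proof (rule ccontr)
  assume transposed_zero: "\<not> ?thesis"
  note \<tau>D = mat_orthogonal_involutionD[OF \<tau>]
  have "\<tau> (unit2 0 0) = unit2 1 1"
  proof (rule reversed_matrix_units_2[of "\<lambda>i j. \<tau> (unit2 i j)"])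
    show "\<tau> (unit2 k l) * \<tau> (unit2 i j) = (if j = k then \<tau> (unit2 i l) else 0\<^sub>m 2 2)"
      if "i < 2" "j < 2" "k < 2" "l < 2" for i j k l
      using \<tau>D(3)[of "unit2 i j" "unit2 k l", symmetric] mat_orthogonal_involution_zero[OF \<tau>] that
      by (simp add: unit2_mult)
    show "\<tau> (unit2 i j) \<noteq> 0\<^sub>m 2 2" if "i < 2" "j < 2" for i j
    proof
      assume "\<tau> (unit2 i j) = 0\<^sub>m 2 2"
      hence "unit2 i j = (0\<^sub>m 2 2 :: 'f mat)" using \<tau>D(4)[of "unit2 i j"] mat_orthogonal_involution_zero[OF \<tau>] by simp
      from arg_cong[OF this, of "\<lambda>M. M $$ (i, j)"] that show False by simp
    qed
    have "unit2 0 0 + unit2 1 1 = (1\<^sub>m 2 :: 'f mat)" by (subst mat2_eq_iff) auto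
    thus "\<tau> (unit2 0 0) + \<tau> (unit2 1 1) = 1\<^sub>m 2"
      using \<tau>D(2)[of "unit2 0 0" "unit2 1 1"] mat_orthogonal_involution_one[OF \<tau>] by simp
  qed (use transposed_zero \<tau>D(1) in auto)
  moreover have "unit2 0 0 + unit2 1 1 = (1\<^sub>m 2 :: 'f mat)" by (subst mat2_eq_iff) auto
  ultimately show False using \<tau>D(6)[of "unit2 0 0"] by simp
qed

definition column_mat2 :: "nat \<Rightarrow> (nat \<Rightarrow> 'a::zero) \<Rightarrow> 'a mat" where
  "column_mat2 j v = mat 2 2 (\<lambda>(k, l). if l = j then v k else 0)"

lemma column_mat2_carrier [simp]: "column_mat2 j v \<in> carrier_mat 2 2"
  unfolding column_mat2_def by simp

lemma mat_orthogonal_involution_2_fixed_column: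
  assumes \<tau>: "mat_orthogonal_involution 2 (\<tau> :: 'f::field mat \<Rightarrow> 'f mat)"
  shows "\<exists>v j. j < 2 \<and> v j = 1 \<and> \<tau> (column_mat2 j v) = column_mat2 j v"
proof -
  note \<tau>D = mat_orthogonal_involutionD[OF \<tau>]
  obtain i j where i: "i < 2" and j: "j < 2" and q: "\<tau> (unit2 i j) $$ (j, i) \<noteq> 0"
    using mat_orthogonal_involution_2_transposed_entry[OF \<tau>] by blast
  define T where "T = \<tau> (unit2 i j)"
  have T: "T \<in> carrier_mat 2 2" unfolding T_def by (rule \<tau>D(1)) simp
  define v where "v k = T $$ (k, i) / T $$ (j, i)" for k
  \<comment> \<open>\<open>\<tau>\<close> fixes \<open>T e\<^sub>i\<^sub>j\<close> because \<open>\<tau> T = e\<^sub>i\<^sub>j\<close>; its \<open>j\<close>-th column is the \<open>i\<close>-th column of \<open>T\<close>.\<close>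
  have "column_mat2 j v = (1 / T $$ (j, i)) \<cdot>\<^sub>m (T * unit2 i j)"
    using i j T by (subst mat2_eq_iff)
      (auto simp: column_mat2_def v_def index_mult_mat_2 less_2_cases_iff simp del: index_mult_mat(1))
  moreover have "\<tau> (T * unit2 i j) = T * unit2 i j"
    using \<tau>D(3)[OF T unit2_carrier[of i j]] \<tau>D(4)[OF unit2_carrier[of i j]] unfolding T_def by simp
  ultimately have "\<tau> (column_mat2 j v) = column_mat2 j v" using \<tau>D(5)[of "T * unit2 i j"] T by simp
  moreover have "v j = 1" using q unfolding v_def T_def by simp
  ultimately show ?thesis using j by blast
qed

section \<open>The algebra \<open>A \<otimes> M\<^sub>2(F) = M\<^sub>2(A)\<close>\<close>

lemma F_algebraD:
  assumes "F_algebra (sm :: 'f::field \<Rightarrow> 'a::ring_1 \<Rightarrow> 'a)"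
  shows "sm c (x + y) = sm c x + sm c y" "sm (c + d) x = sm c x + sm d x"
    "sm (c * d) x = sm c (sm d x)" "sm 1 x = x" "sm c (x * y) = sm c x * y" "sm c (x * y) = x * sm c y"
  using assms unfolding F_algebra_def by blast+

lemma F_algebra_simps:
  assumes "F_algebra (sm :: 'f::field \<Rightarrow> 'a::ring_1 \<Rightarrow> 'a)"
  shows "sm 0 x = 0" "sm c 0 = 0" "sm c 1 * x = sm c x" "x * sm c 1 = sm c x"
    "sm c a * sm d b = sm (c * d) (a * b)" "sm c (sm d x) = sm d (sm c x)"
proof -
  note sm = F_algebraD[OF assms]
  show "sm 0 x = 0" using sm(2)[of 0 0 x] by simp
  show "sm c 0 = 0" using sm(1)[of c 0 0] by simp
  show "sm c 1 * x = sm c x" using sm(5)[of c 1 x] by simp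
  show "x * sm c 1 = sm c x" using sm(6)[of c x 1] by simp
  show "sm c a * sm d b = sm (c * d) (a * b)" by (simp add: sm(3,5,6)[symmetric] mult.commute)
  show "sm c (sm d x) = sm d (sm c x)" by (simp add: sm(3)[symmetric] mult.commute)
qed

definition tensor_M2 :: "('f::field \<Rightarrow> 'a::ring_1 \<Rightarrow> 'a) \<Rightarrow> 'a \<Rightarrow> 'f mat \<Rightarrow> 'a mat" where
  "tensor_M2 sm a m = mat 2 2 (\<lambda>(k, l). sm (m $$ (k, l)) a)"

lemma tensor_M2_carrier [simp]: "tensor_M2 sm a m \<in> carrier_mat 2 2"
  unfolding tensor_M2_def by simp

lemma tensor_M2_dims [simp]: "dim_row (tensor_M2 sm a m) = 2" "dim_col (tensor_M2 sm a m) = 2"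
  unfolding tensor_M2_def by simp_all

lemma tensor_M2_index [simp]: "k < 2 \<Longrightarrow> l < 2 \<Longrightarrow> tensor_M2 sm a m $$ (k, l) = sm (m $$ (k, l)) a"
  unfolding tensor_M2_def by simp

context
  fixes sm :: "'f::field \<Rightarrow> 'a::ring_1 \<Rightarrow> 'a"
  assumes sm: "F_algebra sm"
begin

lemma tensor_M2_mult:
  assumes "m \<in> carrier_mat 2 2" "m' \<in> carrier_mat 2 2"
  shows "tensor_M2 sm a m * tensor_M2 sm b m' = tensor_M2 sm (a * b) (m * m')"
  using assms
  by (subst mat2_eq_iff)
    (auto simp: index_mult_mat_2 F_algebra_simps(5)[OF sm] F_algebraD(2)[OF sm, symmetric]
      simp del: index_mult_mat(1))

lemma tensor_M2_add_left: "tensor_M2 sm (a + b) m = tensor_M2 sm a m + tensor_M2 sm b m"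
  by (subst mat2_eq_iff) (auto simp: F_algebraD[OF sm])

lemma tensor_M2_add_right:
  assumes "m \<in> carrier_mat 2 2" "m' \<in> carrier_mat 2 2"
  shows "tensor_M2 sm a (m + m') = tensor_M2 sm a m + tensor_M2 sm a m'"
  using assms by (subst mat2_eq_iff) (auto simp: F_algebraD[OF sm])

lemma tensor_M2_smult: "map_mat (sm c) (tensor_M2 sm a m) = tensor_M2 sm (sm c a) m"
  by (subst mat2_eq_iff) (auto simp: F_algebraD[OF sm, symmetric] mult.commute)

lemma tensor_M2_one: "tensor_M2 sm 1 (1\<^sub>m 2) = 1\<^sub>m 2"
  by (subst mat2_eq_iff) (auto simp: F_algebraD[OF sm] F_algebra_simps[OF sm])

lemma tensor_M2_zero: "tensor_M2 sm a (0\<^sub>m 2 2) = 0\<^sub>m 2 2"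
  by (subst mat2_eq_iff) (auto simp: F_algebra_simps[OF sm])

lemma tensor_M2_inv_tensor:
  assumes \<sigma>: "involution_first_kind sm \<sigma>" and \<tau>: "mat_orthogonal_involution 2 \<tau>"
    and m: "m \<in> carrier_mat 2 2"
  shows "tensor_M2_inv sm \<sigma> \<tau> (tensor_M2 sm a m) = tensor_M2 sm (\<sigma> a) (\<tau> m)"
proof -
  note \<tau>D = mat_orthogonal_involutionD[OF \<tau>]
  have \<sigma>_sm: "\<sigma> (sm c x) = sm c (\<sigma> x)" for c x using \<sigma> unfolding involution_first_kind_def by auto
  have \<tau>c: "\<tau> (unit2 i j) \<in> carrier_mat 2 2" for i j by (rule \<tau>D(1)) simp
  have m_units: "m = m $$ (0, 0) \<cdot>\<^sub>m unit2 0 0 + m $$ (0, 1) \<cdot>\<^sub>m unit2 0 1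
     + m $$ (1, 0) \<cdot>\<^sub>m unit2 1 0 + m $$ (1, 1) \<cdot>\<^sub>m unit2 1 1"
    using m by (subst mat2_eq_iff) auto
  have smult_unit2: "c \<cdot>\<^sub>m unit2 i j \<in> carrier_mat 2 2" for c i j by simp
  have \<tau>m: "\<tau> m = m $$ (0, 0) \<cdot>\<^sub>m \<tau> (unit2 0 0) + m $$ (0, 1) \<cdot>\<^sub>m \<tau> (unit2 0 1)
     + m $$ (1, 0) \<cdot>\<^sub>m \<tau> (unit2 1 0) + m $$ (1, 1) \<cdot>\<^sub>m \<tau> (unit2 1 1)"
    by (subst m_units) (simp only: \<tau>D(2) \<tau>D(5) smult_unit2 add_carrier_mat unit2_carrier)
  have [simp]: "dim_row (\<tau> (unit2 i j)) = 2" "dim_col (\<tau> (unit2 i j)) = 2" for i j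
    using \<tau>c[of i j] by auto
  show ?thesis
    unfolding tensor_M2_inv_def
    by (subst \<tau>m, subst mat2_eq_iff) (auto simp: numeral_2_eq_2 \<sigma>_sm F_algebraD[OF sm, symmetric] ac_simps)
qed

lemma tensor_M2_column_sandwich:
  assumes X: "X \<in> carrier_mat 2 2" and j: "j < 2"
  shows "tensor_M2 sm 1 (column_mat2 j v) * X * tensor_M2 sm 1 (column_mat2 j v) =
    tensor_M2 sm (sm (v 0) (X $$ (j, 0)) + sm (v 1) (X $$ (j, 1))) (column_mat2 j v)"
  using j X
  by (subst mat2_eq_iff)
    (auto simp: column_mat2_def less_2_cases_iff index_mult_mat_2 F_algebra_simps[OF sm] F_algebraD[OF sm]
      mult_carrier_mat[OF tensor_M2_carrier X] simp del: index_mult_mat(1))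

end

lemma column_mat2_idempotent:
  assumes "j < 2" "v j = (1::'f::field)"
  shows "column_mat2 j v * column_mat2 j v = column_mat2 j v"
  using assms by (subst mat2_eq_iff) (auto simp: column_mat2_def index_mult_mat_2 less_2_cases_iff
      simp del: index_mult_mat(1))

lemma column_mat2_complement:
  assumes j: "j < 2" and vj: "v j = (1::'f::field)"
  shows "\<exists>u w. u \<in> carrier_mat 2 2 \<and> w \<in> carrier_mat 2 2 \<and> u * w = column_mat2 j v \<and>
    w * u + column_mat2 j v = 1\<^sub>m 2 \<and> column_mat2 j v * w = 0\<^sub>m 2 2 \<and> u * column_mat2 j v = 0\<^sub>m 2 2"
proof (intro exI conjI)
  define u where "u = mat 2 2 (\<lambda>(k, l). v k * (if l = j then - v (1 - j) else 1))"
  define w where "w = mat 2 2 (\<lambda>(k, l). if k = 1 - j \<and> l = j then 1 else (0::'f))"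
  show u: "u \<in> carrier_mat 2 2" and w: "w \<in> carrier_mat 2 2" unfolding u_def w_def by auto
  have "j = 0 \<or> j = 1" using j by auto
  thus "u * w = column_mat2 j v" "w * u + column_mat2 j v = 1\<^sub>m 2"
    "column_mat2 j v * w = 0\<^sub>m 2 2" "u * column_mat2 j v = 0\<^sub>m 2 2"
    using vj u w
    by (auto simp: mat2_eq_iff index_mult_mat_2 u_def w_def column_mat2_def
        mult_carrier_mat[OF u w] mult_carrier_mat[OF w u] simp del: index_mult_mat(1))
qed

locale M2_tensor_iso =
  fixes sm :: "'f::field \<Rightarrow> 'a::ring_1 \<Rightarrow> 'a" and \<sigma> :: "'a \<Rightarrow> 'a" and \<tau> :: "'f mat \<Rightarrow> 'f mat"
    and N :: nat and \<phi> :: "'a mat \<Rightarrow> 'f mat" and j :: nat and v :: "nat \<Rightarrow> 'f"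
  assumes F_algebra: "F_algebra sm"
    and involution: "involution_first_kind sm \<sigma>"
    and \<tau>: "mat_orthogonal_involution 2 \<tau>"
    and bij: "bij_betw \<phi> (carrier_mat 2 2) (carrier_mat N N)"
    and hom: "\<forall>x\<in>carrier_mat 2 2. \<forall>y\<in>carrier_mat 2 2. \<phi> (x + y) = \<phi> x + \<phi> y \<and> \<phi> (x * y) = \<phi> x * \<phi> y"
    and smult: "\<forall>c. \<forall>x\<in>carrier_mat 2 2. \<phi> (map_mat (sm c) x) = c \<cdot>\<^sub>m \<phi> x"
    and transpose: "\<forall>x\<in>carrier_mat 2 2. \<phi> (tensor_M2_inv sm \<sigma> \<tau> x) = transpose_mat (\<phi> x)"
    and j: "j < 2" and vj: "v j = 1" and fixed: "\<tau> (column_mat2 j v) = column_mat2 j v"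
begin

lemma \<phi>_carrier: "x \<in> carrier_mat 2 2 \<Longrightarrow> \<phi> x \<in> carrier_mat N N"
  using bij by (rule bij_betw_apply)

lemma \<phi>_eqD: "x \<in> carrier_mat 2 2 \<Longrightarrow> y \<in> carrier_mat 2 2 \<Longrightarrow> \<phi> x = \<phi> y \<Longrightarrow> x = y"
  using bij unfolding bij_betw_def inj_on_def by blast

lemma \<phi>_surj: "Y \<in> carrier_mat N N \<Longrightarrow> \<exists>X\<in>carrier_mat 2 2. \<phi> X = Y"
  using bij unfolding bij_betw_def by (metis imageE)

lemma \<phi>_add: "x \<in> carrier_mat 2 2 \<Longrightarrow> y \<in> carrier_mat 2 2 \<Longrightarrow> \<phi> (x + y) = \<phi> x + \<phi> y"
  and \<phi>_mult: "x \<in> carrier_mat 2 2 \<Longrightarrow> y \<in> carrier_mat 2 2 \<Longrightarrow> \<phi> (x * y) = \<phi> x * \<phi> y"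
  using hom by blast+

lemma \<phi>_one: "\<phi> (1\<^sub>m 2) = 1\<^sub>m N"
proof -
  obtain X where X: "X \<in> carrier_mat 2 2" and "\<phi> X = 1\<^sub>m N" using \<phi>_surj[of "1\<^sub>m N"] by auto
  moreover have "\<phi> X = \<phi> (1\<^sub>m 2) * \<phi> X" using \<phi>_mult[of "1\<^sub>m 2" X] X by simp
  ultimately show ?thesis using \<phi>_carrier[of "1\<^sub>m 2"] by simp
qed

lemma \<phi>_zero: "\<phi> (0\<^sub>m 2 2) = 0\<^sub>m N N"
proof -
  obtain X where X: "X \<in> carrier_mat 2 2" and "\<phi> X = 0\<^sub>m N N" using \<phi>_surj[of "0\<^sub>m N N"] by auto
  moreover have "\<phi> (0\<^sub>m 2 2) = \<phi> (0\<^sub>m 2 2) * \<phi> X" using \<phi>_mult[of "0\<^sub>m 2 2" X] X by simp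
  ultimately show ?thesis using \<phi>_carrier[of "0\<^sub>m 2 2"] by simp
qed

lemma \<phi>_tensor_mult:
  assumes "m \<in> carrier_mat 2 2" "m' \<in> carrier_mat 2 2"
  shows "\<phi> (tensor_M2 sm a m) * \<phi> (tensor_M2 sm b m') = \<phi> (tensor_M2 sm (a * b) (m * m'))"
  using \<phi>_mult[of "tensor_M2 sm a m" "tensor_M2 sm b m'"] tensor_M2_mult[OF F_algebra assms] by simp

definition embed :: "'a \<Rightarrow> 'f mat" where
  "embed a = \<phi> (tensor_M2 sm a (column_mat2 j v))"

lemma embed_carrier: "embed a \<in> carrier_mat N N"
  unfolding embed_def by (simp add: \<phi>_carrier)

lemma embed_add: "embed (a + b) = embed a + embed b"
  unfolding embed_def tensor_M2_add_left[OF F_algebra] by (simp add: \<phi>_add)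

lemma embed_mult: "embed (a * b) = embed a * embed b"
  unfolding embed_def using \<phi>_tensor_mult column_mat2_idempotent[of j v, OF j vj] by simp

lemma embed_smult: "embed (sm c a) = c \<cdot>\<^sub>m embed a"
  unfolding embed_def using smult tensor_M2_smult[OF F_algebra] by (metis tensor_M2_carrier)

lemma embed_transpose: "embed (\<sigma> a) = transpose_mat (embed a)"
  unfolding embed_def using transpose tensor_M2_inv_tensor[OF F_algebra involution \<tau>] fixed
  by (metis column_mat2_carrier tensor_M2_carrier)

lemma inj_embed: "inj embed"
proof (rule injI)
  fix a b assume "embed a = embed b"
  hence "tensor_M2 sm a (column_mat2 j v) = tensor_M2 sm b (column_mat2 j v)"
    unfolding embed_def by (rule \<phi>_eqD[rotated 2]) auto
  hence "tensor_M2 sm a (column_mat2 j v) $$ (j, j) = tensor_M2 sm b (column_mat2 j v) $$ (j, j)" by simp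
  thus "a = b" using j vj F_algebraD(4)[OF F_algebra] by (simp add: column_mat2_def)
qed

text \<open>\<open>\<phi>\<close> carries the corner \<open>(1 \<otimes> f) M\<^sub>2(A) (1 \<otimes> f) = A \<otimes> f\<close> onto the corner of \<open>embed 1\<close>.\<close>
lemma range_embed: "range embed = {Y \<in> carrier_mat N N. embed 1 * Y * embed 1 = Y}"
proof (intro equalityI subsetI)
  fix Y assume "Y \<in> range embed"
  thus "Y \<in> {Y \<in> carrier_mat N N. embed 1 * Y * embed 1 = Y}"
    using embed_carrier embed_mult[of 1] embed_mult[of _ 1] by auto
next
  fix Y assume "Y \<in> {Y \<in> carrier_mat N N. embed 1 * Y * embed 1 = Y}"
  hence Y: "Y \<in> carrier_mat N N" and PYP: "embed 1 * Y * embed 1 = Y" by auto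
  obtain X where X: "X \<in> carrier_mat 2 2" and XY: "\<phi> X = Y" using \<phi>_surj[OF Y] by auto
  define f1 where "f1 = tensor_M2 sm 1 (column_mat2 j v)"
  have f1: "f1 \<in> carrier_mat 2 2" unfolding f1_def by simp
  have "\<phi> (f1 * X * f1) = \<phi> X"
    using \<phi>_mult[OF mult_carrier_mat[OF f1 X] f1] \<phi>_mult[OF f1 X] PYP XY
    unfolding f1_def embed_def by simp
  hence "f1 * X * f1 = X" by (rule \<phi>_eqD[rotated 2]) (use f1 X in auto)
  hence "embed (sm (v 0) (X $$ (j, 0)) + sm (v 1) (X $$ (j, 1))) = Y"
    using tensor_M2_column_sandwich[OF F_algebra X j, of v] XY unfolding f1_def embed_def by simp
  thus "Y \<in> range embed" by blast
qed

lemma corner_representation_embed: "corner_representation sm \<sigma> N (embed 1) embed"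
  unfolding corner_representation_def
  using inj_embed range_embed embed_add embed_mult embed_smult embed_transpose by blast

lemma embed_one_complement:
  "\<exists>U W. U \<in> carrier_mat N N \<and> W \<in> carrier_mat N N \<and> U * W = embed 1 \<and> W * U + embed 1 = 1\<^sub>m N \<and>
     embed 1 * W = 0\<^sub>m N N \<and> U * embed 1 = 0\<^sub>m N N"
proof -
  define \<chi> where "\<chi> m = \<phi> (tensor_M2 sm 1 m)" for m
  have \<chi>_mult: "\<chi> m * \<chi> m' = \<chi> (m * m')" if "m \<in> carrier_mat 2 2" "m' \<in> carrier_mat 2 2" for m m'
    unfolding \<chi>_def using \<phi>_tensor_mult[OF that] by simp
  have \<chi>_add: "\<chi> m + \<chi> m' = \<chi> (m + m')" if "m \<in> carrier_mat 2 2" "m' \<in> carrier_mat 2 2" for m m'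
    unfolding \<chi>_def using \<phi>_add tensor_M2_add_right[OF F_algebra that] by simp
  have \<chi>_0: "\<chi> (0\<^sub>m 2 2) = 0\<^sub>m N N" and \<chi>_1: "\<chi> (1\<^sub>m 2) = 1\<^sub>m N"
    unfolding \<chi>_def using \<phi>_zero \<phi>_one tensor_M2_zero[OF F_algebra] tensor_M2_one[OF F_algebra] by simp_all
  obtain u w where u: "u \<in> carrier_mat 2 2" and w: "w \<in> carrier_mat 2 2"
    and rel: "u * w = column_mat2 j v" "w * u + column_mat2 j v = 1\<^sub>m 2"
      "column_mat2 j v * w = 0\<^sub>m 2 2" "u * column_mat2 j v = 0\<^sub>m 2 2"
    using column_mat2_complement[of j v, OF j vj] by blast
  have "\<chi> u * \<chi> w = embed 1" "\<chi> w * \<chi> u + embed 1 = 1\<^sub>m N"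
    "embed 1 * \<chi> w = 0\<^sub>m N N" "\<chi> u * embed 1 = 0\<^sub>m N N"
    using rel \<chi>_mult \<chi>_add \<chi>_0 \<chi>_1 u w unfolding embed_def \<chi>_def[symmetric] by simp_all
  moreover have "\<chi> u \<in> carrier_mat N N" "\<chi> w \<in> carrier_mat N N" unfolding \<chi>_def by (simp_all add: \<phi>_carrier)
  ultimately show ?thesis by blast
qed

end

theorem lemma5p9:
  fixes sm :: "'f::field \<Rightarrow> 'a::ring_1 \<Rightarrow> 'a"
    and \<sigma> :: "'a \<Rightarrow> 'a"
    and \<tau> :: "'f mat \<Rightarrow> 'f mat"
    and n :: nat
  assumes "CHAR('f) = 2"
    and "central_simple_algebra sm"
    and "orthogonal_involution sm \<sigma>"
    and "mat_orthogonal_involution 2 \<tau>"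
    and "alg_inv_iso (carrier_mat 2 2) (+) (*) (\<lambda>c X. map_mat (sm c) X) (tensor_M2_inv sm \<sigma> \<tau>)
           (carrier_mat (2^n) (2^n)) (+) (*) (\<lambda>c M. c \<cdot>\<^sub>m M) transpose_mat"
  shows "alg_inv_iso UNIV (+) (*) sm \<sigma>
           (carrier_mat (2^(n-1)) (2^(n-1))) (+) (*) (\<lambda>c M. c \<cdot>\<^sub>m M) transpose_mat"
proof -
  obtain j v where "j < 2" "v j = 1" "\<tau> (column_mat2 j v) = column_mat2 j v"
    using mat_orthogonal_involution_2_fixed_column[OF assms(4)] by blast
  with assms obtain \<phi> where "M2_tensor_iso sm \<sigma> \<tau> (2^n) \<phi> j v"
    unfolding M2_tensor_iso_def alg_inv_iso_def central_simple_algebra_def orthogonal_involution_def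
    by blast
  then interpret M2_tensor_iso sm \<sigma> \<tau> "2^n" \<phi> j v .
  have \<sigma>1: "\<sigma> 1 = 1" by (rule involution_first_kind_one[OF involution])
  note rep = corner_representation_embed
  have "\<not> row_sums_vanish (2^n) (embed 1)"
    using assms(1,3) corner_representation_not_row_sums_vanish[OF _ rep \<sigma>1]
    unfolding orthogonal_involution_def by blast
  then obtain r Q where "Q \<in> carrier_mat (2^n) r" "transpose_mat Q * Q = 1\<^sub>m r" "Q * transpose_mat Q = embed 1"
    using symmetric_idempotent_factor[OF assms(1) corner_representation_symmetric_idempotent[OF rep \<sigma>1]]
    by blast
  then interpret isometry_frame Q "embed 1" "2^n" r by unfold_locales
  have "2^n = r + r" using embed_one_complement dim_eq_double by blast
  hence "r = 2^(n-1)" by (cases n) auto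
  thus ?thesis using alg_inv_iso_corner_representation[OF rep] by simp
qed

end
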